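(* There is a constant $c_1>0$ such that for all sufficiently large $n$, $$h_3(n,4,1) > c_1\left(\frac{\log n}{\log\log n}\right)^{1/2}.$$ Equivalently, every $n$-vertex $3$-graph in which no four vertices span exactly one edge has a clique or coclique of size greater than $c_1(\log n/\log\log n)^{1/2}$.
   Context: For an $r$-uniform hypergraph ($r$-graph) $H$, a homogeneous set is a set of vertices that is either a clique (every $r$-subset is an edge) or a coclique (no $r$-subset is an edge); $h(H)$ denotes the size of a largest homogeneous set. An $(m,f)$-graph is an $r$-graph with $m$ vertices and $f$ edges; $H$ is $(m,f)$-free if it contains no induced sub-hypergraph that is an $(m,f)$-graph. For a set $Q$ of pairs $(m,f)$, $H$ is $Q$-free if it is $(m,f)$-free for every $(m,f)\in Q$. $h_r(n,Q)$ is the minimum of $h(H)$ over all $n$-vertex $Q$-free $r$-graphs $H$, and $h_r(n,m,f)=h_r(n,\{(m,f)\})$. *)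

theory Defs
  imports "HOL-Analysis.Analysis"
begin

definition is_rgraph :: "nat \<Rightarrow> 'a set \<Rightarrow> 'a set set \<Rightarrow> bool" where
  "is_rgraph r V E \<longleftrightarrow> (\<forall>e\<in>E. e \<subseteq> V \<and> card e = r)"

definition homogeneous :: "nat \<Rightarrow> 'a set set \<Rightarrow> 'a set \<Rightarrow> bool" where
  "homogeneous r E S \<longleftrightarrow>
     (\<forall>e. e \<subseteq> S \<and> card e = r \<longrightarrow> e \<in> E) \<or> (\<forall>e. e \<subseteq> S \<and> card e = r \<longrightarrow> e \<notin> E)"

definition hom_number :: "nat \<Rightarrow> 'a set \<Rightarrow> 'a set set \<Rightarrow> nat" where
  "hom_number r V E = Max {card S | S. S \<subseteq> V \<and> homogeneous r E S}"

definition mf_free :: "'a set \<Rightarrow> 'a set set \<Rightarrow> nat \<Rightarrow> nat \<Rightarrow> bool" where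
  "mf_free V E m f \<longleftrightarrow> \<not> (\<exists>S. S \<subseteq> V \<and> card S = m \<and> card {e \<in> E. e \<subseteq> S} = f)"

definition h_Q :: "nat \<Rightarrow> nat \<Rightarrow> (nat \<times> nat) set \<Rightarrow> nat" where
  "h_Q r n Q = Min {hom_number r {..<n} E | E.
      is_rgraph r {..<n} E \<and> (\<forall>(m,f)\<in>Q. mf_free {..<n} E m f)}"

definition h_mf :: "nat \<Rightarrow> nat \<Rightarrow> nat \<Rightarrow> nat \<Rightarrow> nat" where
  "h_mf r n m f = h_Q r n {(m, f)}"

end

theory Submission
  imports Defs
begin

text \<open>In a (4,1)-free 3-graph, if \<open>{a,b,x}\<close> and \<open>{a,b,y}\<close> are non-edges then \<open>{a,x,y}\<close> and
  \<open>{b,x,y}\<close> are both edges or both non-edges. Suppose there is no homogeneous set of size \<open>k\<close>.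
  Choose vertices \<open>v\<^sub>0, v\<^sub>1, \<dots>\<close> greedily, keeping a pool of candidates, so that whether
  \<open>{v\<^sub>i, v\<^sub>j, w}\<close> is an edge for later \<open>w\<close> depends only on \<open>i < j\<close>. The twin property lets
  every earlier vertex be tracked by one of fewer than \<open>k\<close> representatives spanning a clique, so
  each step shrinks the pool by a factor \<open>O(k)\<close> on average and \<open>k\<^sup>2 + 1\<close> steps are possible
  once \<open>n \<ge> 2 (6k)\<^bsup>k\<^sup>2 + 1\<^esup>\<close>. The induced colouring of pairs \<open>i < j\<close> again has the twin
  property, which forces a monochromatic set of size \<open>k\<close> among \<open>k\<^sup>2\<close> indices, i.e. a
  homogeneous set. Hence \<open>h\<^sub>3(n,4,1) \<ge> k\<close> whenever \<open>log n \<ge> c k\<^sup>2 log k\<close>.\<close>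

lemma card3_subset_of_four:
  assumes "e \<subseteq> {a,b,c,d}" "card e = 3" "distinct [a,b,c,d]"
  shows "e = {b,c,d} \<or> e = {a,c,d} \<or> e = {a,b,d} \<or> e = {a,b,c}"
proof -
  have "finite e" using assms(2) by (metis card.infinite zero_neq_numeral)
  have four: "card {a,b,c,d} = 4" using assms(3) by auto
  have "\<not> {a,b,c,d} \<subseteq> e"
  proof
    assume "{a,b,c,d} \<subseteq> e"
    then have "card {a,b,c,d} \<le> card e" using \<open>finite e\<close> card_mono by blast
    then show False using four assms(2) by simp
  qed
  then obtain u where u: "u \<in> {a,b,c,d}" "u \<notin> e" by blast
  then have sub: "e \<subseteq> {a,b,c,d} - {u}" using assms(1) by blast
  have "card ({a,b,c,d} - {u}) = 3" using four u(1) by simp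
  then have "e = {a,b,c,d} - {u}" using card_subset_eq[OF _ sub] assms(2) by simp
  then show ?thesis using u(1) assms(3) by auto
qed

lemma sum_Pow_power_card:
  fixes q :: "'b::comm_semiring_1"
  assumes "finite A"
  shows "(\<Sum>Z\<in>Pow A. q ^ card Z) = (1 + q) ^ card A"
  using prod_add[OF assms, of "\<lambda>_. q" "\<lambda>_. 1"] by (simp add: add.commute)

lemma one_plus_inverse_power_le_3:
  assumes "m \<le> k" "0 < k"
  shows "(1 + 1 / real k) ^ m \<le> 3"
proof -
  have "(1 + 1 / real k) ^ m \<le> exp (1 / real k) ^ m"
    by (rule power_mono) (use exp_ge_add_one_self in auto)
  also have "\<dots> = exp (real m / real k)" by (simp add: exp_of_nat_mult[symmetric])
  also have "\<dots> \<le> exp 1" using assms by simp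
  also have "\<dots> \<le> 3" by (rule exp_le)
  finally show ?thesis .
qed

text \<open>The weights \<open>(1/k) ^ card Z\<close> over all \<open>Z \<subseteq> A\<close> sum to \<open>(1 + 1/k) ^ card A < e\<close>, so some
  fibre exceeds its weighted share of \<open>S\<close>.\<close>
lemma exists_heavy_fibre:
  fixes f :: "'a \<Rightarrow> 'b set"
  assumes "finite S" "finite A" "f ` S \<subseteq> Pow A" "card A < k"
  shows "\<exists>Z\<subseteq>A. real (card S) \<le> 3 * real k ^ card Z * real (card {w\<in>S. f w = Z})"
proof (rule ccontr)
  assume "\<not> ?thesis"
  then have light: "real (card {w\<in>S. f w = Z}) < real (card S) / 3 * (1 / real k) ^ card Z"
    if "Z \<in> Pow A" for Z
    using that assms(4) by (auto simp: not_le power_one_over field_simps)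
  have "real (card S) = (\<Sum>Z\<in>Pow A. real (card {w\<in>S. f w = Z}))"
    using sum.group[OF assms(1) finite_Pow_iff[THEN iffD2, OF assms(2)] assms(3), of "\<lambda>_. 1::real"]
    by simp
  also have "\<dots> < (\<Sum>Z\<in>Pow A. real (card S) / 3 * (1 / real k) ^ card Z)"
    by (rule sum_strict_mono) (use assms(2) light in auto)
  also have "\<dots> = real (card S) / 3 * (\<Sum>Z\<in>Pow A. (1 / real k) ^ card Z)"
    by (rule sum_distrib_left[symmetric])
  also have "\<dots> = real (card S) / 3 * (1 + 1 / real k) ^ card A"
    by (simp only: sum_Pow_power_card[OF assms(2)])
  also have "\<dots> \<le> real (card S) / 3 * 3"
    using one_plus_inverse_power_le_3[of "card A" k] assms(4) by (intro mult_left_mono) auto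
  finally show False by simp
qed

lemma three_subsets_of_image_increasing:
  fixes v :: "'i::linorder \<Rightarrow> 'a"
  assumes "inj_on v Q"
    and P: "\<And>a b d. a\<in>Q \<Longrightarrow> b\<in>Q \<Longrightarrow> d\<in>Q \<Longrightarrow> a<b \<Longrightarrow> b<d \<Longrightarrow> P {v a, v b, v d}"
  shows "e \<subseteq> v ` Q \<Longrightarrow> card e = 3 \<Longrightarrow> P e"
proof -
  assume "e \<subseteq> v ` Q" "card e = 3"
  then obtain x y z where xyz: "e = {x,y,z}" "x\<noteq>y" "y\<noteq>z" "x\<noteq>z" "{x,y,z} \<subseteq> v ` Q"
    by (metis card_3_iff)
  then obtain a b d where abd: "a\<in>Q" "b\<in>Q" "d\<in>Q" "x = v a" "y = v b" "z = v d"
    by (metis image_iff insert_subset)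
  then have "e = {v a, v b, v d}" "a\<noteq>b" "b\<noteq>d" "a\<noteq>d" using xyz by blast+
  have any_order: "P {v a, v b, v d}" if "a\<in>Q" "b\<in>Q" "d\<in>Q" "a\<noteq>b" "b\<noteq>d" "a\<noteq>d" for a b d
  proof -
    have "a<b \<and> b<d \<or> a<d \<and> d<b \<or> b<a \<and> a<d \<or> b<d \<and> d<a \<or> d<a \<and> a<b \<or> d<b \<and> b<a"
      using that by (auto simp: neq_iff)
    then show ?thesis
      using P[of a b d] P[of a d b] P[of b a d] P[of b d a] P[of d a b] P[of d b a] that
      by (elim disjE) (simp_all add: insert_commute)
  qed
  show "P e" unfolding \<open>e = {v a, v b, v d}\<close> by (rule any_order) fact+
qed

text \<open>An Erdos--Szekeres type bound: the minimum of \<open>P\<close> either starts a \<open>\<not> G\<close>-set among its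
  \<open>\<not> G\<close>-successors (which are pairwise \<open>\<not> G\<close> by the transfer property), or has many
  \<open>G\<close>-successors, where induction applies.\<close>
lemma ordered_colouring_ramsey:
  fixes G :: "'i::linorder \<Rightarrow> 'i \<Rightarrow> bool"
  assumes transfer: "\<And>i j d. i\<in>U \<Longrightarrow> j\<in>U \<Longrightarrow> d\<in>U \<Longrightarrow> i<j \<Longrightarrow> j<d \<Longrightarrow> \<not> G i j \<Longrightarrow> G i d \<longleftrightarrow> G j d"
  shows "finite P \<Longrightarrow> P \<subseteq> U \<Longrightarrow> a * b \<le> card P \<Longrightarrow> 1 \<le> b \<Longrightarrow>
    (\<exists>Q\<subseteq>P. card Q = a \<and> (\<forall>i\<in>Q. \<forall>j\<in>Q. i<j \<longrightarrow> G i j)) \<or>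
    (\<exists>Q\<subseteq>P. card Q = b \<and> (\<forall>i\<in>Q. \<forall>j\<in>Q. i<j \<longrightarrow> \<not> G i j))"
proof (induction a arbitrary: P)
  case 0
  then show ?case by (intro disjI1 exI[of _ "{}"]) simp
next
  case (Suc a)
  have finP: "finite P" and PU: "P \<subseteq> U" and b1: "1 \<le> b" using Suc.prems by auto
  have "P \<noteq> {}" using Suc.prems by auto
  define m where "m = Min P"
  have mP: "m \<in> P" and m_le: "\<And>j. j \<in> P \<Longrightarrow> m \<le> j"
    unfolding m_def using finP \<open>P \<noteq> {}\<close> by auto
  define M where "M = {j\<in>P. m < j \<and> \<not> G m j}"
  define N where "N = {j\<in>P. m < j \<and> G m j}"
  have P_eq: "P = insert m (M \<union> N)" and "m \<notin> M \<union> N" and "M \<inter> N = {}"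
    unfolding M_def N_def using mP m_le by force+
  moreover have "finite M" "finite N" using finP unfolding M_def N_def by auto
  ultimately have card_P: "card P = Suc (card M + card N)" by (simp add: card_Un_disjoint)
  show ?case
  proof (cases "b - 1 \<le> card M")
    case True
    obtain M' where M': "M' \<subseteq> M" "card M' = b - 1"
      using obtain_subset_with_card_n[OF True] by blast
    have "\<not> G i j" if "i \<in> insert m M'" "j \<in> insert m M'" "i < j" for i j
    proof -
      have jM: "j \<in> M" using that M' m_le unfolding M_def by fastforce
      show ?thesis
      proof (cases "i = m")
        case False
        then have iM: "i \<in> M" using that M' by auto
        then have "\<not> G m i \<and> m < i" "\<not> G m j" using jM unfolding M_def by auto
        then show ?thesis using transfer[of m i j] iM jM mP PU that(3) unfolding M_def by auto
      qed (use jM M_def in auto)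
    qed
    moreover have "card (insert m M') = b"
    proof -
      have "m \<notin> M'" "finite M'"
        using M' \<open>m \<notin> M \<union> N\<close> finite_subset[OF M'(1) \<open>finite M\<close>] by auto
      then show ?thesis using M'(2) b1 by simp
    qed
    moreover have "insert m M' \<subseteq> P" using M' mP P_eq by auto
    ultimately show ?thesis by (intro disjI2 exI[of _ "insert m M'"]) simp
  next
    case False
    then have "a * b \<le> card N" using card_P Suc.prems(3) by simp
    have "N \<subseteq> U" using PU P_eq by auto
    consider
        Q where "Q \<subseteq> N" "card Q = a" "\<forall>i\<in>Q. \<forall>j\<in>Q. i<j \<longrightarrow> G i j"
      | Q where "Q \<subseteq> N" "card Q = b" "\<forall>i\<in>Q. \<forall>j\<in>Q. i<j \<longrightarrow> \<not> G i j"
      using Suc.IH[OF \<open>finite N\<close> \<open>N \<subseteq> U\<close> \<open>a * b \<le> card N\<close> b1] by blast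
    then show ?thesis
    proof cases
      case (1 Q)
      have "G i j" if "i \<in> insert m Q" "j \<in> insert m Q" "i < j" for i j
      proof -
        have "i \<in> P" using that(1) 1(1) P_eq by auto
        then have jQ: "j \<in> Q" using that m_le[of i] by auto
        show ?thesis
        proof (cases "i = m")
          case True
          then show ?thesis using jQ 1(1) unfolding N_def by auto
        next
          case False
          then show ?thesis using that jQ 1(3) by auto
        qed
      qed
      moreover have "card (insert m Q) = Suc a"
      proof -
        have "m \<notin> Q" "finite Q"
          using 1(1) \<open>m \<notin> M \<union> N\<close> finite_subset[OF 1(1) \<open>finite N\<close>] by auto
        then show ?thesis using 1(2) by simp
      qed
      moreover have "insert m Q \<subseteq> P" using 1 mP P_eq by auto
      ultimately show ?thesis by (intro disjI1 exI[of _ "insert m Q"]) simp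
    next
      case (2 Q)
      then show ?thesis using P_eq by (intro disjI2 exI[of _ Q]) auto
    qed
  qed
qed

definition after :: "nat \<Rightarrow> (nat \<Rightarrow> 'a) \<Rightarrow> 'a set \<Rightarrow> nat \<Rightarrow> 'a set" where
  "after t v S j = v ` {j<..<t} \<union> S"

lemma after_last: "after (Suc t) v S t = S"
  unfolding after_def by auto

lemma after_extend_subset:
  assumes "j < t" "S' \<subseteq> S" "x \<in> S"
  shows "after (Suc t) (v(t := x)) S' j \<subseteq> after t v S j"
  using assms unfolding after_def by (auto simp: less_Suc_eq)

locale free41_hypergraph =
  fixes V :: "'a set" and E :: "'a set set" and k :: nat
  assumes finite_V: "finite V" and rgraph: "is_rgraph 3 V E" and free: "mf_free V E 4 1"
    and small_homogeneous: "\<And>S. S \<subseteq> V \<Longrightarrow> homogeneous 3 E S \<Longrightarrow> card S < k"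
begin

lemma k_pos: "0 < k"
  using small_homogeneous[of "{}"] unfolding homogeneous_def by auto

lemma twin_triples:
  assumes "{a,b,x,y} \<subseteq> V" "distinct [a,b,x,y]" "{a,b,x} \<notin> E" "{a,b,y} \<notin> E"
  shows "{a,x,y} \<in> E \<longleftrightarrow> {b,x,y} \<in> E"
proof (rule ccontr)
  assume differ: "\<not> ({a,x,y} \<in> E \<longleftrightarrow> {b,x,y} \<in> E)"
  have "e = {b,x,y} \<or> e = {a,x,y}" if "e \<in> E" "e \<subseteq> {a,b,x,y}" for e
  proof -
    have "card e = 3" using rgraph \<open>e \<in> E\<close> unfolding is_rgraph_def by auto
    then show ?thesis using card3_subset_of_four[OF that(2)] assms(2-4) that(1) by auto
  qed
  then have "{e \<in> E. e \<subseteq> {a,b,x,y}} = {{a,x,y}} \<or> {e \<in> E. e \<subseteq> {a,b,x,y}} = {{b,x,y}}"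
    using differ by blast
  then have "card {e \<in> E. e \<subseteq> {a,b,x,y}} = 1" by auto
  moreover have "card {a,b,x,y} = 4" using assms(2) by auto
  ultimately show False using free assms(1) unfolding mf_free_def by blast
qed

text \<open>A chain state records chosen vertices \<open>v 0, \<dots>, v (t - 1)\<close> and a pool \<open>S\<close> of
  candidates for the later ones. Whether \<open>{v i, v j, w}\<close> is an edge, for \<open>w\<close> chosen or to be
  chosen after \<open>v j\<close>, depends only on \<open>i < j\<close>; the indices in \<open>A\<close> span cliques with every later
  vertex, and every other index behaves on pairs from the pool like one in \<open>A\<close>.\<close>

definition end_homogeneous :: "nat \<Rightarrow> (nat \<Rightarrow> 'a) \<Rightarrow> 'a set \<Rightarrow> bool" where
  "end_homogeneous t v S \<longleftrightarrow> (\<forall>i j. i < j \<longrightarrow> j < t \<longrightarrow>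
     (\<forall>x\<in>after t v S j. \<forall>y\<in>after t v S j. {v i, v j, x} \<in> E \<longleftrightarrow> {v i, v j, y} \<in> E))"

definition clique_indices :: "nat \<Rightarrow> (nat \<Rightarrow> 'a) \<Rightarrow> 'a set \<Rightarrow> nat set \<Rightarrow> bool" where
  "clique_indices t v S A \<longleftrightarrow> (\<forall>a\<in>A. \<forall>b\<in>A. a < b \<longrightarrow> (\<forall>x\<in>after t v S b. {v a, v b, x} \<in> E))"

definition represented :: "nat \<Rightarrow> (nat \<Rightarrow> 'a) \<Rightarrow> 'a set \<Rightarrow> nat set \<Rightarrow> bool" where
  "represented t v S A \<longleftrightarrow> (\<forall>i<t. i \<notin> A \<longrightarrow>
     (\<exists>r\<in>A. \<forall>x\<in>S. \<forall>y\<in>S. x \<noteq> y \<longrightarrow> ({v i, x, y} \<in> E \<longleftrightarrow> {v r, x, y} \<in> E)))"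

definition chain_state :: "nat \<Rightarrow> (nat \<Rightarrow> 'a) \<Rightarrow> 'a set \<Rightarrow> nat set \<Rightarrow> bool" where
  "chain_state t v S A \<longleftrightarrow> S \<subseteq> V \<and> v ` {..<t} \<subseteq> V - S \<and> inj_on v {..<t} \<and> A \<subseteq> {..<t} \<and>
     end_homogeneous t v S \<and> clique_indices t v S A \<and> represented t v S A"

lemma chain_state_init: "chain_state 0 v V {}"
  unfolding chain_state_def end_homogeneous_def clique_indices_def represented_def by auto

lemma chain_stateD:
  assumes "chain_state t v S A"
  shows chain_state_pool: "S \<subseteq> V"
    and chain_state_chosen: "v ` {..<t} \<subseteq> V - S"
    and chain_state_inj: "inj_on v {..<t}"
    and chain_state_indices: "A \<subseteq> {..<t}"
    and chain_state_end_homogeneous: "end_homogeneous t v S"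
    and chain_state_clique: "clique_indices t v S A"
    and chain_state_represented: "represented t v S A"
  using assms unfolding chain_state_def by blast+

lemma chain_state_end_homogeneousD:
  assumes "chain_state t v S A" "i < j" "j < t" "x \<in> after t v S j" "y \<in> after t v S j"
  shows "{v i, v j, x} \<in> E \<longleftrightarrow> {v i, v j, y} \<in> E"
  using chain_state_end_homogeneous[OF assms(1)] assms(2-5) unfolding end_homogeneous_def by blast

lemma chain_state_representative:
  assumes "chain_state t v S A" "i < t"
  shows "\<exists>r\<in>A. \<forall>p\<in>S. \<forall>q\<in>S. p \<noteq> q \<longrightarrow> ({v i, p, q} \<in> E \<longleftrightarrow> {v r, p, q} \<in> E)"
proof (cases "i \<in> A")
  case False
  then show ?thesis using chain_state_represented[OF assms(1)] assms(2) unfolding represented_def by blast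
qed blast

lemma card_clique_indices_lt:
  assumes "chain_state t v S A"
  shows "card A < k"
proof -
  have A: "A \<subseteq> {..<t}" using chain_state_indices[OF assms] .
  have inj: "inj_on v A" using inj_on_subset[OF chain_state_inj[OF assms] A] .
  have vV: "v ` A \<subseteq> V" using chain_state_chosen[OF assms] A by blast
  have clique: "clique_indices t v S A" using chain_state_clique[OF assms] .
  have "e \<in> E" if "e \<subseteq> v ` A" "card e = 3" for e
  proof (rule three_subsets_of_image_increasing[OF inj _ that])
    fix a b d assume "a\<in>A" "b\<in>A" "d\<in>A" "a<b" "b<d"
    moreover have "v d \<in> after t v S b" unfolding after_def using \<open>d\<in>A\<close> \<open>b<d\<close> A by auto
    ultimately show "{v a, v b, v d} \<in> E" using clique unfolding clique_indices_def by blast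
  qed
  then have "homogeneous 3 E (v ` A)" unfolding homogeneous_def by blast
  then have "card (v ` A) < k" using small_homogeneous vV by blast
  then show ?thesis using card_image[OF inj] by simp
qed

context
  fixes t v S A x S' Z
  assumes state: "chain_state t v S A" and x: "x \<in> S" and S': "S' \<subseteq> S - {x}" and Z: "Z \<subseteq> A"
    and link: "\<And>a w. a \<in> A \<Longrightarrow> w \<in> S' \<Longrightarrow> {v a, x, w} \<in> E \<longleftrightarrow> a \<notin> Z"
begin

lemma extend_end_homogeneous: "end_homogeneous (Suc t) (v(t := x)) S'"
  unfolding end_homogeneous_def
proof (intro allI impI ballI)
  fix i j y z assume ij: "i < j" "j < Suc t"
    and yz: "y \<in> after (Suc t) (v(t := x)) S' j" "z \<in> after (Suc t) (v(t := x)) S' j"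
  have it: "i < t" and vi: "(v(t := x)) i = v i" using ij by auto
  show "{(v(t := x)) i, (v(t := x)) j, y} \<in> E \<longleftrightarrow> {(v(t := x)) i, (v(t := x)) j, z} \<in> E"
  proof (cases "j = t")
    case True
    then have yz': "y \<in> S'" "z \<in> S'" using yz by (simp_all add: after_last)
    obtain r where r: "r \<in> A" "\<forall>p\<in>S. \<forall>q\<in>S. p \<noteq> q \<longrightarrow> ({v i, p, q} \<in> E \<longleftrightarrow> {v r, p, q} \<in> E)"
      using chain_state_representative[OF state it] ..
    have "{v i, x, w} \<in> E \<longleftrightarrow> r \<notin> Z" if "w \<in> S'" for w
    proof -
      have "w \<in> S" "x \<noteq> w" using S' that by auto
      from r(2)[rule_format, OF x this] show ?thesis using link[OF r(1) that] by simp
    qed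
    then have "{v i, x, y} \<in> E \<longleftrightarrow> {v i, x, z} \<in> E" using yz' by simp
    then show ?thesis using True vi by simp
  next
    case False
    then have jt: "j < t" and vj: "(v(t := x)) j = v j" using ij by auto
    have "y \<in> after t v S j" "z \<in> after t v S j"
      using yz after_extend_subset[OF jt _ x] S' by blast+
    from chain_state_end_homogeneousD[OF state ij(1) jt this] show ?thesis using vi vj by simp
  qed
qed

lemma extend_clique_indices: "clique_indices (Suc t) (v(t := x)) S' (A - Z \<union> {t})"
  unfolding clique_indices_def
proof (intro ballI impI)
  fix a b w assume a: "a \<in> A - Z \<union> {t}" and b: "b \<in> A - Z \<union> {t}" and ab: "a < b"
    and w: "w \<in> after (Suc t) (v(t := x)) S' b"
  have At: "A \<subseteq> {..<t}" using chain_state_indices[OF state] .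
  then have a': "a \<in> A - Z" "a < t" using a b ab by auto
  show "{(v(t := x)) a, (v(t := x)) b, w} \<in> E"
  proof (cases "b = t")
    case True
    then have "w \<in> S'" using w by (simp add: after_last)
    then show ?thesis using link[of a w] a' \<open>b = t\<close> by auto
  next
    case False
    then have b': "b \<in> A - Z" "b < t" using b At by auto
    have "w \<in> after t v S b" using w after_extend_subset[OF b'(2) _ x] S' by blast
    then show ?thesis
      using chain_state_clique[OF state] a' b' ab unfolding clique_indices_def by auto
  qed
qed

lemma dropped_index_twin:
  assumes "r \<in> Z" "p \<in> S'" "q \<in> S'" "p \<noteq> q"
  shows "{v r, p, q} \<in> E \<longleftrightarrow> {x, p, q} \<in> E"
proof (rule twin_triples)
  have "r \<in> A" using assms(1) Z by blast
  then have "v r \<in> V - S" using chain_state_chosen[OF state] chain_state_indices[OF state] by blast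
  moreover have "{x, p, q} \<subseteq> S" "x \<notin> {p, q}" using x S' assms(2,3) by auto
  ultimately show "{v r, x, p, q} \<subseteq> V" "distinct [v r, x, p, q]"
    using chain_state_pool[OF state] assms(4) by auto
  show "{v r, x, p} \<notin> E" "{v r, x, q} \<notin> E"
    using link[OF \<open>r \<in> A\<close>] assms by auto
qed

lemma extend_represented: "represented (Suc t) (v(t := x)) S' (A - Z \<union> {t})"
  unfolding represented_def
proof (intro allI impI)
  fix i assume i: "i < Suc t" "i \<notin> A - Z \<union> {t}"
  then have it: "i < t" and vi: "(v(t := x)) i = v i" by auto
  obtain r where r: "r \<in> A" "\<forall>p\<in>S. \<forall>q\<in>S. p \<noteq> q \<longrightarrow> ({v i, p, q} \<in> E \<longleftrightarrow> {v r, p, q} \<in> E)"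
    using chain_state_representative[OF state it] ..
  have rt: "r < t" using r(1) chain_state_indices[OF state] by blast
  show "\<exists>r\<in>A - Z \<union> {t}. \<forall>p\<in>S'. \<forall>q\<in>S'. p \<noteq> q \<longrightarrow>
      ({(v(t := x)) i, p, q} \<in> E \<longleftrightarrow> {(v(t := x)) r, p, q} \<in> E)"
  proof (cases "r \<in> Z")
    case True
    have "{v i, p, q} \<in> E \<longleftrightarrow> {x, p, q} \<in> E" if "p \<in> S'" "q \<in> S'" "p \<noteq> q" for p q
      using r(2)[rule_format, of p q] dropped_index_twin[OF True that] S' that by auto
    then show ?thesis using vi by (intro bexI[of _ t]) auto
  next
    case False
    then show ?thesis using r rt vi S' by (intro bexI[of _ r]) auto
  qed
qed

lemma chain_state_extend: "chain_state (Suc t) (v(t := x)) S' (A - Z \<union> {t})"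
proof -
  have chosen: "v ` {..<t} \<subseteq> V - S" using chain_state_chosen[OF state] .
  have "inj_on (v(t := x)) {..<t}" using chain_state_inj[OF state] by (simp add: inj_on_def)
  moreover have "x \<notin> (v(t := x)) ` {..<t}" using chosen x by auto
  ultimately have "inj_on (v(t := x)) {..<Suc t}" by (simp add: lessThan_Suc)
  moreover have "(v(t := x)) ` {..<Suc t} \<subseteq> V - S'"
    using chosen x S' chain_state_pool[OF state] by (auto simp: lessThan_Suc)
  moreover have "S' \<subseteq> V" using S' chain_state_pool[OF state] by blast
  moreover have "A - Z \<union> {t} \<subseteq> {..<Suc t}" using chain_state_indices[OF state] by auto
  ultimately show ?thesis
    unfolding chain_state_def
    using extend_end_homogeneous extend_clique_indices extend_represented by blast
qed

end

text \<open>The pool minus the new vertex \<open>x\<close> is split by the set of indices of \<open>A\<close> forming non-edges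
  with \<open>x\<close>; on a heavy fibre with set \<open>Z\<close>, the indices in \<open>Z\<close> are twins of \<open>x\<close> and give way to \<open>t\<close>.\<close>
lemma chain_state_step:
  assumes state: "chain_state t v S A" and two: "2 \<le> card S"
  obtains x S' Z where "chain_state (Suc t) (v(t := x)) S' (A - Z \<union> {t})" "Z \<subseteq> A"
    "card S \<le> 6 * k ^ card Z * card S'"
proof -
  have "finite S" using finite_subset[OF chain_state_pool[OF state] finite_V] .
  have "finite A" using finite_subset[OF chain_state_indices[OF state]] by simp
  obtain x where x: "x \<in> S" using two by fastforce
  define f where "f w = {a\<in>A. {v a, x, w} \<notin> E}" for w
  obtain Z where Z: "Z \<subseteq> A"
    and heavy: "real (card (S - {x})) \<le> 3 * real k ^ card Z * real (card {w\<in>S - {x}. f w = Z})"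
    using exists_heavy_fibre[of "S - {x}" A f k] \<open>finite S\<close> \<open>finite A\<close>
      card_clique_indices_lt[OF state] unfolding f_def by auto
  define S' where "S' = {w\<in>S - {x}. f w = Z}"
  have "chain_state (Suc t) (v(t := x)) S' (A - Z \<union> {t})"
    by (rule chain_state_extend[OF state x _ Z]) (auto simp: S'_def f_def)
  moreover have "card S \<le> 6 * k ^ card Z * card S'"
  proof -
    have "real (card S) \<le> 2 * real (card (S - {x}))" using x two \<open>finite S\<close> by simp
    also have "\<dots> \<le> real (6 * k ^ card Z * card S')" using heavy unfolding S'_def by simp
    finally show ?thesis by linarith
  qed
  ultimately show ?thesis using that Z by blast
qed

text \<open>Each step costs a factor \<open>6\<close> and a factor \<open>k\<close> per index leaving \<open>A\<close>; as every index enters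
  \<open>A\<close> once, at most \<open>t - |A|\<close> factors \<open>k\<close> have been paid after \<open>t\<close> steps.\<close>
lemma chain_state_exists:
  assumes big: "2 * (6 * k) ^ T \<le> card V"
  shows "t \<le> T \<Longrightarrow> \<exists>v S A. chain_state t v S A \<and> card V \<le> card S * 6 ^ t * k ^ (t - card A)"
proof (induction t)
  case 0
  have "chain_state 0 undefined V {}" by (rule chain_state_init)
  then show ?case by force
next
  case (Suc t)
  then obtain v S A where state: "chain_state t v S A"
    and size: "card V \<le> card S * 6 ^ t * k ^ (t - card A)" by auto
  have "card A \<le> t" using card_mono[OF _ chain_state_indices[OF state]] by simp
  define X where "X = (6 * k) ^ t"
  have "k ^ (t - card A) \<le> k ^ t" using k_pos by (simp add: power_increasing)
  then have "card V \<le> card S * X"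
    using le_trans[OF size mult_le_mono2[of _ _ "card S * 6 ^ t"]]
    by (simp add: X_def power_mult_distrib mult.assoc)
  moreover have "2 * X \<le> card V"
    using big Suc.prems k_pos power_increasing[of t T "6 * k"] unfolding X_def by simp
  moreover have "0 < X" using k_pos unfolding X_def by simp
  ultimately have "2 \<le> card S" by (metis le_trans mult_le_cancel2)
  then obtain x S' Z where state': "chain_state (Suc t) (v(t := x)) S' (A - Z \<union> {t})" and "Z \<subseteq> A"
    and shrink: "card S \<le> 6 * k ^ card Z * card S'"
    using chain_state_step[OF state] by blast
  have "t \<notin> A" "finite A"
    using chain_state_indices[OF state] finite_subset[OF chain_state_indices[OF state]] by auto
  then have card_A': "card (A - Z \<union> {t}) = card A - card Z + 1"
    using \<open>Z \<subseteq> A\<close> by (simp add: card_Diff_subset finite_subset)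
  have "card Z \<le> card A" using \<open>Z \<subseteq> A\<close> \<open>finite A\<close> by (simp add: card_mono)
  then have exponent: "Suc t - card (A - Z \<union> {t}) = (t - card A) + card Z"
    using card_A' \<open>card A \<le> t\<close> by simp
  have "card V \<le> (6 * k ^ card Z * card S') * 6 ^ t * k ^ (t - card A)"
    using le_trans[OF size mult_le_mono1[OF mult_le_mono1[OF shrink]]] .
  also have "\<dots> = card S' * 6 ^ Suc t * k ^ (Suc t - card (A - Z \<union> {t}))"
    unfolding exponent by (simp add: power_add algebra_simps)
  finally show ?case using state' by blast
qed

text \<open>By end-homogeneity any vertex chosen after \<open>v j\<close> could replace \<open>v (Suc j)\<close>.\<close>
definition pair_colour :: "(nat \<Rightarrow> 'a) \<Rightarrow> nat \<Rightarrow> nat \<Rightarrow> bool" where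
  "pair_colour v i j \<longleftrightarrow> {v i, v j, v (Suc j)} \<in> E"

lemma edge_iff_pair_colour:
  assumes "chain_state T v S A" "i < j" "j < d" "d < T"
  shows "{v i, v j, v d} \<in> E \<longleftrightarrow> pair_colour v i j"
proof -
  have "v d \<in> after T v S j" "v (Suc j) \<in> after T v S j"
    using assms(3,4) unfolding after_def by auto
  from chain_state_end_homogeneousD[OF assms(1,2) _ this] show ?thesis
    unfolding pair_colour_def using assms(3,4) by simp
qed

lemma pair_colour_transfer:
  assumes state: "chain_state T v S A" and "i < j" "j < d" "Suc d < T" "\<not> pair_colour v i j"
  shows "pair_colour v i d \<longleftrightarrow> pair_colour v j d"
proof -
  have V: "v ` {..<T} \<subseteq> V" using chain_state_chosen[OF state] by blast
  have inj: "inj_on v {..<T}" using chain_state_inj[OF state] .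
  have "{v i, v d, v (Suc d)} \<in> E \<longleftrightarrow> {v j, v d, v (Suc d)} \<in> E"
  proof (rule twin_triples)
    show "{v i, v j, v d, v (Suc d)} \<subseteq> V" using V assms(2-4) by auto
    show "distinct [v i, v j, v d, v (Suc d)]" using assms(2-4) by (simp add: inj_on_eq_iff[OF inj])
    show "{v i, v j, v d} \<notin> E" "{v i, v j, v (Suc d)} \<notin> E"
      using edge_iff_pair_colour[OF state] assms(2-5) by auto
  qed
  then show ?thesis unfolding pair_colour_def .
qed

lemma card_monochromatic_lt:
  assumes state: "chain_state T v S A" and "Q \<subseteq> {..<T}"
    and mono: "\<And>i j. i \<in> Q \<Longrightarrow> j \<in> Q \<Longrightarrow> i < j \<Longrightarrow> pair_colour v i j = c"
  shows "card Q < k"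
proof -
  have inj: "inj_on v Q" using inj_on_subset[OF chain_state_inj[OF state] assms(2)] .
  have V: "v ` Q \<subseteq> V" using chain_state_chosen[OF state] assms(2) by blast
  have "(e \<in> E) = c" if "e \<subseteq> v ` Q" "card e = 3" for e
  proof (rule three_subsets_of_image_increasing[OF inj _ that])
    fix a b d assume "a \<in> Q" "b \<in> Q" "d \<in> Q" "a < b" "b < d"
    then show "({v a, v b, v d} \<in> E) = c"
      using edge_iff_pair_colour[OF state] mono assms(2) by auto
  qed
  then have "homogeneous 3 E (v ` Q)" unfolding homogeneous_def by (cases c) auto
  then have "card (v ` Q) < k" using small_homogeneous V by blast
  then show ?thesis using card_image[OF inj] by simp
qed

lemma chain_length_le:
  assumes state: "chain_state T v S A"
  shows "T \<le> k * k"
proof (rule ccontr)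
  assume "\<not> T \<le> k * k"
  then have transfer: "pair_colour v i d \<longleftrightarrow> pair_colour v j d"
    if "i \<in> {..<k*k}" "j \<in> {..<k*k}" "d \<in> {..<k*k}" "i < j" "j < d" "\<not> pair_colour v i j" for i j d
    using pair_colour_transfer[OF state] that by auto
  have "(\<exists>Q\<subseteq>{..<k*k}. card Q = k \<and> (\<forall>i\<in>Q. \<forall>j\<in>Q. i < j \<longrightarrow> pair_colour v i j)) \<or>
        (\<exists>Q\<subseteq>{..<k*k}. card Q = k \<and> (\<forall>i\<in>Q. \<forall>j\<in>Q. i < j \<longrightarrow> \<not> pair_colour v i j))"
    by (rule ordered_colouring_ramsey[where U="{..<k*k}" and G="pair_colour v", OF transfer])
      (use k_pos in simp_all)
  then obtain Q c where "Q \<subseteq> {..<k*k}" "card Q = k"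
    "\<And>i j. i \<in> Q \<Longrightarrow> j \<in> Q \<Longrightarrow> i < j \<Longrightarrow> pair_colour v i j = c"
  proof (elim disjE exE conjE)
    fix Q assume "Q \<subseteq> {..<k*k}" "card Q = k" "\<forall>i\<in>Q. \<forall>j\<in>Q. i < j \<longrightarrow> pair_colour v i j"
    then show thesis using that[of Q True] by simp
  next
    fix Q assume "Q \<subseteq> {..<k*k}" "card Q = k" "\<forall>i\<in>Q. \<forall>j\<in>Q. i < j \<longrightarrow> \<not> pair_colour v i j"
    then show thesis using that[of Q False] by simp
  qed
  moreover have "{..<k*k} \<subseteq> {..<T}" using \<open>\<not> T \<le> k * k\<close> by auto
  ultimately show False using card_monochromatic_lt[OF state] by (metis order.trans less_irrefl)
qed

lemma card_V_lt: "card V < 2 * (6 * k) ^ (k * k + 1)"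
proof (rule ccontr)
  assume "\<not> ?thesis"
  then obtain v S A where "chain_state (k * k + 1) v S A"
    using chain_state_exists[of "k * k + 1" "k * k + 1"] by auto
  then show False using chain_length_le by fastforce
qed

end

lemma hom_number_ge:
  assumes "finite V" "is_rgraph 3 V E" "mf_free V E 4 1" "2 * (6 * k) ^ (k * k + 1) \<le> card V"
  shows "k \<le> hom_number 3 V E"
proof (rule ccontr)
  assume "\<not> k \<le> hom_number 3 V E"
  have "finite {card S | S. S \<subseteq> V \<and> homogeneous 3 E S}"
    using \<open>finite V\<close> by simp
  then have "card S < k" if "S \<subseteq> V" "homogeneous 3 E S" for S
    using that \<open>\<not> k \<le> hom_number 3 V E\<close> Max_ge[of _ "card S"] unfolding hom_number_def by fastforce
  then have "free41_hypergraph V E k"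
    using assms(1-3) by unfold_locales
  then show False using free41_hypergraph.card_V_lt assms(4) by fastforce
qed

lemma h_mf_3_4_1_ge:
  assumes "2 * (6 * k) ^ (k * k + 1) \<le> n"
  shows "k \<le> h_mf 3 n 4 1"
proof -
  let ?X = "{hom_number 3 {..<n} E | E. is_rgraph 3 {..<n} E \<and> (\<forall>(m, f)\<in>{(4::nat, 1::nat)}. mf_free {..<n} E m f)}"
  have "?X \<subseteq> (\<lambda>E. hom_number 3 {..<n} E) ` Pow (Pow {..<n})"
    unfolding is_rgraph_def by auto
  then have "finite ?X" by (rule finite_subset) simp
  moreover have "hom_number 3 {..<n} {} \<in> ?X"
    unfolding is_rgraph_def mf_free_def by auto
  moreover have "\<forall>h\<in>?X. k \<le> h" using hom_number_ge[of "{..<n}"] assms by auto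
  ultimately show ?thesis unfolding h_mf_def h_Q_def by (metis (no_types, lifting) Min_in empty_iff)
qed

lemma ln_le_div_64:
  fixes L :: real
  assumes "16384 \<le> L"
  shows "64 * ln L \<le> L"
proof -
  have "128 \<le> sqrt L" using real_sqrt_le_mono[OF assms] by (simp add: real_sqrt_unique)
  have "ln L = 2 * ln (sqrt L)" using assms by (simp add: ln_sqrt)
  also have "\<dots> \<le> 2 * sqrt L" using ln_le_minus_one[of "sqrt L"] assms by simp
  finally have "64 * ln L \<le> 128 * sqrt L" by simp
  also have "\<dots> \<le> sqrt L * sqrt L" by (rule mult_right_mono[OF \<open>128 \<le> sqrt L\<close>]) (use assms in simp)
  also have "\<dots> = L" using assms by simp
  finally show ?thesis .
qed

text \<open>With \<open>s\<^sup>2 = L / ln L\<close> and \<open>k \<le> s / 2\<close>, both \<open>k\<^sup>2 + 1 \<le> s\<^sup>2 / 2\<close> and \<open>ln (6k) \<le> ln L\<close>.\<close>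
lemma ln_threshold_le:
  fixes L s :: real and k :: nat
  assumes L: "0 < L" and lnL: "1 \<le> ln L" and s: "8 \<le> s" "s\<^sup>2 = L / ln L"
    and k: "1 \<le> k" "real k \<le> s / 2"
  shows "ln (2 * (6 * real k) ^ (k * k + 1)) \<le> L"
proof -
  have "64 \<le> s\<^sup>2" using mult_mono[OF s(1) s(1)] s(1) by (simp add: power2_eq_square)
  have "real k * real k \<le> (s / 2) * (s / 2)" using k s(1) by (intro mult_mono) auto
  then have kk: "real (k * k + 1) \<le> s\<^sup>2 / 2"
    using \<open>64 \<le> s\<^sup>2\<close> by (simp add: power2_eq_square)
  have "L \<le> L * ln L" using mult_left_mono[OF lnL, of L] L by simp
  then have "s\<^sup>2 \<le> L" using s(2) lnL by (simp add: pos_divide_le_eq)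
  have "6 * real k \<le> 3 * s" using k(2) by simp
  also have "\<dots> \<le> s\<^sup>2" using mult_right_mono[of 3 s s] s(1) by (simp add: power2_eq_square)
  finally have "ln (6 * real k) \<le> ln L" using \<open>s\<^sup>2 \<le> L\<close> k(1) by simp
  have "ln (2 * (6 * real k) ^ (k * k + 1)) = ln 2 + ln ((6 * real k) ^ (k * k + 1))"
    using k(1) by (intro ln_mult_pos) auto
  also have "\<dots> = ln 2 + real (k * k + 1) * ln (6 * real k)"
    using k(1) by (subst ln_realpow) auto
  also have "\<dots> \<le> L / 2 + s\<^sup>2 / 2 * ln L"
  proof (rule add_mono)
    show "ln 2 \<le> L / 2" using ln_2_less_1 \<open>64 \<le> s\<^sup>2\<close> \<open>s\<^sup>2 \<le> L\<close> by linarith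
    show "real (k * k + 1) * ln (6 * real k) \<le> s\<^sup>2 / 2 * ln L"
      using kk \<open>ln (6 * real k) \<le> ln L\<close> k(1) by (intro mult_mono) auto
  qed
  also have "\<dots> = L" using s(2) lnL by (simp add: field_simps)
  finally show ?thesis .
qed

lemma h_mf_3_4_1_gt:
  assumes "exp 16384 \<le> real n"
  shows "real (h_mf 3 n 4 1) > 1/8 * sqrt (ln (real n) / ln (ln (real n)))"
proof -
  define L where "L = ln (real n)"
  define s where "s = sqrt (L / ln L)"
  have "0 < real n" using assms by (metis exp_gt_zero less_le_trans)
  then have L: "16384 \<le> L" unfolding L_def using assms by (metis ln_exp ln_le_cancel_iff exp_gt_zero)
  have "exp 1 \<le> L" using exp_le L by linarith
  then have lnL: "1 \<le> ln L" using ln_mono[of "exp 1" L] by simp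
  have "64 \<le> L / ln L" using ln_le_div_64[OF L] lnL by (simp add: pos_le_divide_eq)
  then have s: "8 \<le> s" "s\<^sup>2 = L / ln L"
    unfolding s_def using real_sqrt_le_mono[of 64] by (auto simp: real_sqrt_unique)
  define k where "k = nat \<lceil>s / 4\<rceil> + 1"
  have k: "s / 4 + 1 \<le> real k" "real k \<le> s / 2" "1 \<le> k" unfolding k_def using s(1) by linarith+
  have "ln (2 * (6 * real k) ^ (k * k + 1)) \<le> ln (real n)"
    using ln_threshold_le[OF _ lnL s k(3,2)] L unfolding L_def by simp
  then have "real (2 * (6 * k) ^ (k * k + 1)) \<le> real n"
    using \<open>0 < real n\<close> k(3) by (subst (asm) ln_le_cancel_iff) auto
  then have "k \<le> h_mf 3 n 4 1" by (intro h_mf_3_4_1_ge) (simp only: of_nat_le_iff)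
  moreover have "1/8 * s < real k" using k(1) s(1) by linarith
  ultimately show ?thesis unfolding s_def L_def by simp
qed

theorem mainTheorem2:
  shows "\<exists>c1::real. c1 > 0 \<and>
    (\<forall>\<^sub>F n in sequentially.
       real (h_mf 3 n 4 1) > c1 * sqrt (ln (real n) / ln (ln (real n))))"
proof (intro exI conjI)
  show "(0::real) < 1/8" by simp
  have "\<forall>\<^sub>F n in sequentially. exp 16384 \<le> real n"
    by (rule eventually_sequentiallyI[of "nat \<lceil>exp (16384::real)\<rceil>"])
      (metis real_nat_ceiling_ge of_nat_le_iff order_trans)
  then show "\<forall>\<^sub>F n in sequentially. real (h_mf 3 n 4 1) > 1/8 * sqrt (ln (real n) / ln (ln (real n)))"
    by eventually_elim (rule h_mf_3_4_1_gt)
qed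

end
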